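(* In $NOM$, for all finite sequences $\Gamma,\Delta$ of formulas and all formulas $\phi,\psi,\chi$, the following rules are derivable: (i) from $\Gamma,\phi,\phi,\Delta\vdash\psi$ infer $\Gamma,\phi,\Delta\vdash\psi$; (ii) from $\Gamma,\phi,\Delta\vdash\psi$ infer $\Gamma,\phi,\phi,\Delta\vdash\psi$; (iii) from $\Gamma\vdash\phi$ and $\Gamma,\phi,\Delta\vdash\psi$ infer $\Gamma,\Delta\vdash\psi$; (iv) from $\Gamma\vdash\phi$ and $\Gamma,\Delta\vdash\psi$ infer $\Gamma,\phi,\Delta\vdash\psi$; (v) from $\Gamma,\phi,\psi\vdash\phi$, $\Gamma,\phi,\psi,\Delta\vdash\chi$ and $\Gamma,\psi,\phi\vdash\psi$ infer $\Gamma,\psi,\phi,\Delta\vdash\chi$; (vi) $\Gamma,\neg\phi,\phi,\Delta\vdash\psi$ is derivable; (vii) $\Gamma,\phi,\neg\phi,\Delta\vdash\psi$ is derivable; (viii) from $\Gamma,\neg\neg\phi,\Delta\vdash\psi$ infer $\Gamma,\phi,\Delta\vdash\psi$; (ix) from $\Gamma,\phi,\Delta\vdash\psi$ infer $\Gamma,\neg\neg\phi,\Delta\vdash\psi$; (x) from $\Gamma,\phi,\Delta\vdash\psi$ and $\Gamma,\neg\phi,\Delta\vdash\psi$ infer $\Gamma,\Delta\vdash\psi$.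
   Context: The propositional deductive system $NOM$: formulas are built from propositional letters using $\wedge$, $\rightarrow$, $\neg$. Sequents are $\phi_1,\ldots,\phi_n\vdash\psi$ ($n\ge0$) with antecedent a finite ordered sequence; commas denote concatenation. With $\Gamma$ a finite possibly empty sequence of formulas and $\phi,\psi,\chi$ formulas, the rules of $NOM$ are: (assumption) $\Gamma,\phi\vdash\phi$; (cut) $\Gamma\vdash\phi$, $\Gamma,\phi\vdash\psi$ $\Rightarrow$ $\Gamma\vdash\psi$; (paste) $\Gamma\vdash\phi$, $\Gamma\vdash\psi$ $\Rightarrow$ $\Gamma,\phi\vdash\psi$; (compatible exchange) $\Gamma,\phi,\psi\vdash\phi$, $\Gamma,\phi,\psi\vdash\chi$, $\Gamma,\psi,\phi\vdash\psi$ $\Rightarrow$ $\Gamma,\psi,\phi\vdash\chi$; ($\wedge$-intro) $\Gamma\vdash\phi$, $\Gamma\vdash\psi$ $\Rightarrow$ $\Gamma\vdash\phi\wedge\psi$; ($\wedge$-elim) $\Gamma\vdash\phi\wedge\psi$ $\Rightarrow$ $\Gamma\vdash\phi$ and $\Rightarrow$ $\Gamma\vdash\psi$; ($\rightarrow$-intro) $\Gamma,\phi\vdash\psi$ $\Rightarrow$ $\Gamma\vdash\phi\rightarrow\psi$; ($\rightarrow$-elim) $\Gamma\vdash\phi\rightarrow\psi$ $\Rightarrow$ $\Gamma,\phi\vdash\psi$; (excluded middle) $\Gamma,\phi\vdash\psi$, $\Gamma,\neg\phi\vdash\psi$ $\Rightarrow$ $\Gamma\vdash\psi$; (explosion) $\Gamma\vdash\neg\phi$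 $\Rightarrow$ $\Gamma,\phi\vdash\psi$. A rule schema is derivable if in every instance its conclusion can be derived from its premises using these rules. *)

theory Defs
  imports Main
begin

datatype 'a form = Var 'a | Conj "'a form" "'a form" | Imp "'a form" "'a form" | Neg "'a form"

type_synonym 'a sequent = "'a form list \<times> 'a form"

inductive nom :: "'a sequent set \<Rightarrow> 'a form list \<Rightarrow> 'a form \<Rightarrow> bool" for H where
  premise: "(G, p) \<in> H \<Longrightarrow> nom H G p"
| assumption: "nom H (G @ [p]) p"
| cut: "nom H G p \<Longrightarrow> nom H (G @ [p]) q \<Longrightarrow> nom H G q"
| paste: "nom H G p \<Longrightarrow> nom H G q \<Longrightarrow> nom H (G @ [p]) q"
| compat_exchange: "nom H (G @ [p, q]) p \<Longrightarrow> nom H (G @ [p, q]) r \<Longrightarrow> nom H (G @ [q, p]) q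
    \<Longrightarrow> nom H (G @ [q, p]) r"
| conjI: "nom H G p \<Longrightarrow> nom H G q \<Longrightarrow> nom H G (Conj p q)"
| conjE1: "nom H G (Conj p q) \<Longrightarrow> nom H G p"
| conjE2: "nom H G (Conj p q) \<Longrightarrow> nom H G q"
| impI: "nom H (G @ [p]) q \<Longrightarrow> nom H G (Imp p q)"
| impE: "nom H G (Imp p q) \<Longrightarrow> nom H (G @ [p]) q"
| excluded_middle: "nom H (G @ [p]) q \<Longrightarrow> nom H (G @ [Neg p]) q \<Longrightarrow> nom H G q"
| explosion: "nom H G (Neg p) \<Longrightarrow> nom H (G @ [p]) q"

definition derivable_rule :: "'a sequent list \<Rightarrow> 'a sequent \<Rightarrow> bool" where
  "derivable_rule Ps C \<longleftrightarrow> nom (set Ps) (fst C) (snd C)"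

end

theory Submission
  imports Defs
begin

text \<open>By \<open>\<rightarrow>\<close>-introduction and \<open>\<rightarrow>\<close>-elimination, \<open>\<Gamma>, \<Delta> \<turnstile> \<psi>\<close> is interderivable with
  \<open>\<Gamma> \<turnstile> \<delta>\<^sub>1 \<rightarrow> (\<dots> \<rightarrow> (\<delta>\<^sub>n \<rightarrow> \<psi>))\<close>. Hence any manipulation of the end of the antecedent that is
  valid for every succedent remains valid when an arbitrary context \<open>\<Delta>\<close> follows, and each rule
  reduces to the case \<open>\<Delta> = []\<close>, where it is one of the rules of NOM or a short combination of
  them. The double-negation rules use that formulas which derive each other as the last
  hypothesis are interchangeable there, by pasting and compatible exchange.\<close>

lemma nom_Imp_iff: "nom H G (Imp p q) \<longleftrightarrow> nom H (G @ [p]) q"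
  by (blast intro: nom.impI nom.impE)

lemma nom_append_iff_foldr_Imp: "nom H (G @ D) q \<longleftrightarrow> nom H G (foldr Imp D q)"
proof (induction D arbitrary: G)
  case Nil
  then show ?case by simp
next
  case (Cons d D)
  have "nom H (G @ d # D) q \<longleftrightarrow> nom H ((G @ [d]) @ D) q"
    by simp
  also have "\<dots> \<longleftrightarrow> nom H (G @ [d]) (foldr Imp D q)"
    by (rule Cons.IH)
  also have "\<dots> \<longleftrightarrow> nom H G (foldr Imp (d # D) q)"
    by (simp add: nom_Imp_iff)
  finally show ?case .
qed

lemma nom_append_axiom:
  assumes "\<And>s. nom H X s"
  shows "nom H (X @ D) q"
  using assms by (simp add: nom_append_iff_foldr_Imp)

lemma nom_append_rule:
  assumes "\<And>s. nom H X s \<Longrightarrow> nom H Y s" and "nom H (X @ D) q"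
  shows "nom H (Y @ D) q"
  using assms by (simp add: nom_append_iff_foldr_Imp)

lemma nom_append_rule2:
  assumes "\<And>s. nom H X s \<Longrightarrow> nom H Y s \<Longrightarrow> nom H Z s"
    and "nom H (X @ D) q" and "nom H (Y @ D) q"
  shows "nom H (Z @ D) q"
  using assms by (simp add: nom_append_iff_foldr_Imp)

lemma nom_contract: "nom H (G @ [p, p]) s \<Longrightarrow> nom H (G @ [p]) s"
  using nom.cut[of H "G @ [p]" p s] nom.assumption[of H G p] by simp

lemma nom_duplicate: "nom H (G @ [p]) s \<Longrightarrow> nom H (G @ [p, p]) s"
  using nom.paste[of H "G @ [p]" p s] nom.assumption[of H G p] by simp

lemma nom_paste_self: "nom H (G @ [a]) b \<Longrightarrow> nom H (G @ [a, b]) a"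
  using nom.paste[of H "G @ [a]" b a] nom.assumption[of H G a] by simp

lemma nom_replace_last:
  assumes ab: "nom H (G @ [a]) b" and ba: "nom H (G @ [b]) a" and "nom H (G @ [a]) s"
  shows "nom H (G @ [b]) s"
proof -
  have "nom H (G @ [a, b]) s"
    using nom.paste[OF ab \<open>nom H (G @ [a]) s\<close>] by simp
  with nom_paste_self[OF ab] nom_paste_self[OF ba]
  have "nom H (G @ [b, a]) s"
    by (blast intro: nom.compat_exchange)
  then show ?thesis
    using nom.cut[OF ba] by simp
qed

lemma nom_Neg_Neg_elim: "nom H (G @ [Neg (Neg p)]) p"
proof (rule nom.excluded_middle[where p = p])
  show "nom H ((G @ [Neg (Neg p)]) @ [p]) p"
    by (rule nom.assumption)
  show "nom H ((G @ [Neg (Neg p)]) @ [Neg p]) p"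
    by (rule nom.explosion, rule nom.assumption)
qed

text \<open>Excluded middle only splits on a formula placed after \<open>\<phi>\<close>; moving \<open>\<phi>\<close> into the succedent
  as \<open>\<phi> \<rightarrow> \<not>\<not>\<phi>\<close> lets us split on \<open>\<not>\<phi>\<close> first.\<close>
lemma nom_Neg_Neg_intro: "nom H (G @ [p]) (Neg (Neg p))"
proof -
  have "nom H G (Imp p (Neg (Neg p)))"
  proof (rule nom.excluded_middle[where p = "Neg p"])
    show "nom H (G @ [Neg p]) (Imp p (Neg (Neg p)))"
      by (rule nom.impI, rule nom.explosion, rule nom.assumption)
    show "nom H (G @ [Neg (Neg p)]) (Imp p (Neg (Neg p)))"
      using nom_paste_self[OF nom_Neg_Neg_elim] by (simp add: nom_Imp_iff)
  qed
  then show ?thesis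
    by (rule nom.impE)
qed

lemma nom_Neg_left: "nom H (G @ [Neg p, p]) s"
  using nom.explosion[of H "G @ [Neg p]" p s] nom.assumption[of H G] by simp

lemma nom_Neg_right: "nom H (G @ [p, Neg p]) s"
  using nom.explosion[OF nom_Neg_Neg_intro, of H G p s] by simp

lemma derivable_contraction: "derivable_rule [(G @ [p, p] @ D, q)] (G @ [p] @ D, q)"
  unfolding derivable_rule_def
  using nom_append_rule[where X = "G @ [p, p]" and Y = "G @ [p]" and D = D,
      OF nom_contract nom.premise] by simp

lemma derivable_duplication: "derivable_rule [(G @ [p] @ D, q)] (G @ [p, p] @ D, q)"
  unfolding derivable_rule_def
  using nom_append_rule[where X = "G @ [p]" and Y = "G @ [p, p]" and D = D,
      OF nom_duplicate nom.premise] by simp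

lemma derivable_cut: "derivable_rule [(G, p), (G @ [p] @ D, q)] (G @ D, q)"
  unfolding derivable_rule_def
  using nom_append_rule[where X = "G @ [p]" and Y = G and D = D,
      OF nom.cut[OF nom.premise] nom.premise] by simp

lemma derivable_paste: "derivable_rule [(G, p), (G @ D, q)] (G @ [p] @ D, q)"
  unfolding derivable_rule_def
  using nom_append_rule[where X = G and Y = "G @ [p]" and D = D,
      OF nom.paste[OF nom.premise] nom.premise] by simp

lemma derivable_compat_exchange:
  "derivable_rule [(G @ [p, q], p), (G @ [p, q] @ D, r), (G @ [q, p], q)] (G @ [q, p] @ D, r)"
  unfolding derivable_rule_def
  using nom_append_rule[where X = "G @ [p, q]" and Y = "G @ [q, p]" and D = D,
      OF nom.compat_exchange[OF nom.premise _ nom.premise] nom.premise]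
  by simp

lemma derivable_Neg_left: "derivable_rule [] (G @ [Neg p, p] @ D, q)"
  unfolding derivable_rule_def
  using nom_append_axiom[where X = "G @ [Neg p, p]" and D = D,
      OF nom_Neg_left] by simp

lemma derivable_Neg_right: "derivable_rule [] (G @ [p, Neg p] @ D, q)"
  unfolding derivable_rule_def
  using nom_append_axiom[where X = "G @ [p, Neg p]" and D = D,
      OF nom_Neg_right] by simp

lemma derivable_Neg_Neg_elim_left: "derivable_rule [(G @ [Neg (Neg p)] @ D, q)] (G @ [p] @ D, q)"
  unfolding derivable_rule_def
  using nom_append_rule[where X = "G @ [Neg (Neg p)]" and Y = "G @ [p]" and D = D,
      OF nom_replace_last[OF nom_Neg_Neg_elim nom_Neg_Neg_intro] nom.premise]
  by simp

lemma derivable_Neg_Neg_intro_left: "derivable_rule [(G @ [p] @ D, q)] (G @ [Neg (Neg p)] @ D, q)"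
  unfolding derivable_rule_def
  using nom_append_rule[where X = "G @ [p]" and Y = "G @ [Neg (Neg p)]" and D = D,
      OF nom_replace_last[OF nom_Neg_Neg_intro nom_Neg_Neg_elim] nom.premise]
  by simp

lemma derivable_excluded_middle: "derivable_rule [(G @ [p] @ D, q), (G @ [Neg p] @ D, q)] (G @ D, q)"
  unfolding derivable_rule_def
  using nom_append_rule2[where X = "G @ [p]" and Y = "G @ [Neg p]" and Z = G and D = D,
      OF nom.excluded_middle nom.premise nom.premise] by simp

theorem theorem2p6:
  fixes G D :: "'a form list" and p q r :: "'a form"
  shows
   "derivable_rule [(G @ [p, p] @ D, q)] (G @ [p] @ D, q)
  \<and> derivable_rule [(G @ [p] @ D, q)] (G @ [p, p] @ D, q)
  \<and> derivable_rule [(G, p), (G @ [p] @ D, q)] (G @ D, q)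
  \<and> derivable_rule [(G, p), (G @ D, q)] (G @ [p] @ D, q)
  \<and> derivable_rule [(G @ [p, q], p), (G @ [p, q] @ D, r), (G @ [q, p], q)] (G @ [q, p] @ D, r)
  \<and> derivable_rule [] (G @ [Neg p, p] @ D, q)
  \<and> derivable_rule [] (G @ [p, Neg p] @ D, q)
  \<and> derivable_rule [(G @ [Neg (Neg p)] @ D, q)] (G @ [p] @ D, q)
  \<and> derivable_rule [(G @ [p] @ D, q)] (G @ [Neg (Neg p)] @ D, q)
  \<and> derivable_rule [(G @ [p] @ D, q), (G @ [Neg p] @ D, q)] (G @ D, q)"
  by (intro HOL.conjI derivable_contraction derivable_duplication derivable_cut derivable_paste
      derivable_compat_exchange derivable_Neg_left derivable_Neg_right
      derivable_Neg_Neg_elim_left derivable_Neg_Neg_intro_left derivable_excluded_middle)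

end
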